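(* Let $\psi$ be a log-concave probability density on $\mathbb R$ with CDF $\Psi$, and let $M\ge2$. Then for every $m\in\{1,\dots,M\}$ the function $$\breve\Psi(\mathbf v;m)=\int_{\mathbb R}\psi(t)\prod_{\ell\ne m}\Psi(t+v_m-v_\ell)\,dt,\qquad\mathbf v\in\mathbb R^M,$$ is log-concave on $\mathbb R^M$. *)

theory Defs
  imports "HOL-Analysis.Analysis"
begin

definition log_concave :: "('a::real_vector \<Rightarrow> real) \<Rightarrow> bool" where
  "log_concave f \<longleftrightarrow> (\<forall>x. f x \<ge> 0) \<and>
     (\<forall>x y. \<forall>t::real. 0 \<le> t \<and> t \<le> 1 \<longrightarrow>
        f x powr (1 - t) * f y powr t \<le> f ((1 - t) *\<^sub>R x + t *\<^sub>R y))"

definition prob_density :: "(real \<Rightarrow> real) \<Rightarrow> bool" where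
  "prob_density \<psi> \<longleftrightarrow> (\<forall>x. \<psi> x \<ge> 0) \<and> integrable lborel \<psi> \<and> integral\<^sup>L lborel \<psi> = 1"

definition cdf_of :: "(real \<Rightarrow> real) \<Rightarrow> real \<Rightarrow> real" where
  "cdf_of \<psi> x = (LINT t:{..x}|lborel. \<psi> t)"

definition breve_Psi :: "(real \<Rightarrow> real) \<Rightarrow> real^'n \<Rightarrow> 'n \<Rightarrow> real" where
  "breve_Psi \<psi> v m = (LINT t|lborel. \<psi> t * (\<Prod>l\<in>UNIV - {m}. cdf_of \<psi> (t + v$m - v$l)))"

end

theory Submission
  imports Defs
begin

text \<open>
  For fixed \<open>m\<close> the integrand \<open>F(v, t) = \<psi>(t) \<Prod>\<^bsub>l \<noteq> m\<^esub> \<Psi>(t + v\<^sub>m - v\<^sub>l)\<close> is jointly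
  log-concave in \<open>(v, t)\<close>: it is a product of log-concave functions composed with linear maps,
  once \<open>\<Psi>\<close> is known to be log-concave. By Prekopa's theorem the marginal \<open>v \<mapsto> \<integral> F(v, t) dt\<close>
  of a jointly log-concave function is log-concave, and \<open>\<Psi>\<close> is itself such a marginal, namely
  of \<open>(x, t) \<mapsto> 1[t \<le> x] \<psi>(t)\<close>. Prekopa's theorem follows from the one-dimensional
  Prekopa-Leindler inequality, which the layer-cake formula reduces to the one-dimensional
  Brunn-Minkowski inequality \<open>|(1 - l) A + l B| \<ge> (1 - l) |A| + l |B|\<close>. For the latter, scaled
  copies of \<open>A \<inter> (-\<infinity>, a)\<close> and \<open>B \<inter> (b, \<infinity>)\<close> fit into \<open>C\<close> on the two sides of
  \<open>(1 - l) a + l b\<close>.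
\<close>

section \<open>Brunn-Minkowski inequality on the real line\<close>

lemma emeasure_lborel_le_SUP_Int_lessThan:
  fixes A :: "real set"
  assumes [measurable]: "A \<in> sets borel" and "A \<noteq> {}"
  shows "emeasure lborel A \<le> (SUP a\<in>A. emeasure lborel (A \<inter> {..<a}))"
proof -
  define S where "S = Sup (ereal ` A)"
  obtain f :: "nat \<Rightarrow> ereal" where f: "incseq f" "range f \<subseteq> ereal ` A" "S = (SUP n. f n)"
    using Sup_countable_SUP[of "ereal ` A"] assms(2) unfolding S_def by auto
  have "\<forall>n. \<exists>x. x \<in> A \<and> f n = ereal x"
    using f(2) by blast
  then obtain a where a: "\<And>n. a n \<in> A" "\<And>n. f n = ereal (a n)"
    by metis
  have "incseq a" using f(1) by (simp add: incseq_def a(2))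
  \<comment> \<open>Only a maximum of \<open>A\<close> can lie in none of the rays.\<close>
  have cover: "A \<subseteq> (\<Union>n. A \<inter> {..<a n}) \<union> {real_of_ereal S}"
  proof
    fix x assume x: "x \<in> A"
    then have "ereal x \<le> S" unfolding S_def by (simp add: Sup_upper)
    then consider "ereal x = S" | "ereal x < (SUP n. f n)" using f(3) by fastforce
    then show "x \<in> (\<Union>n. A \<inter> {..<a n}) \<union> {real_of_ereal S}"
    proof cases
      case 1
      then show ?thesis by auto
    next
      case 2
      then obtain n where "ereal x < f n" by (auto simp: less_SUP_iff)
      with x show ?thesis by (auto simp: a(2))
    qed
  qed
  have "emeasure lborel A \<le> emeasure lborel ((\<Union>n. A \<inter> {..<a n}) \<union> {real_of_ereal S})"
    by (rule emeasure_mono[OF cover]) simp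
  also have "\<dots> = emeasure lborel (\<Union>n. A \<inter> {..<a n})"
    by (rule emeasure_Un_null_set) (auto intro: countable_imp_null_set_lborel)
  also have "\<dots> = (SUP n. emeasure lborel (A \<inter> {..<a n}))"
    using \<open>incseq a\<close> by (intro SUP_emeasure_incseq[symmetric]) (auto simp: incseq_def intro: less_le_trans)
  also have "\<dots> \<le> (SUP a\<in>A. emeasure lborel (A \<inter> {..<a}))"
    by (rule SUP_mono) (use a(1) in blast)
  finally show ?thesis .
qed

lemma emeasure_lborel_uminus:
  fixes X :: "real set"
  assumes "X \<in> sets borel"
  shows "emeasure lborel (uminus ` X) = emeasure lborel X"
proof -
  have "uminus ` X = uminus -` X" by force
  then show ?thesis
    using emeasure_distr[of uminus lborel borel X] assms by (simp add: lborel_distr_uminus)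
qed

lemma emeasure_lborel_le_SUP_Int_greaterThan:
  fixes B :: "real set"
  assumes [measurable]: "B \<in> sets borel" and "B \<noteq> {}"
  shows "emeasure lborel B \<le> (SUP b\<in>B. emeasure lborel (B \<inter> {b<..}))"
proof -
  have uminus_image_borel: "uminus ` X \<in> sets borel" if "X \<in> sets borel" for X :: "real set"
  proof -
    have "uminus ` X = uminus -` X \<inter> space borel" by force
    then show ?thesis
      using measurable_sets_borel[of uminus borel X] that by simp
  qed
  have "emeasure lborel B = emeasure lborel (uminus ` B)"
    by (simp add: emeasure_lborel_uminus)
  also have "\<dots> \<le> (SUP a\<in>uminus ` B. emeasure lborel (uminus ` B \<inter> {..<a}))"
    using assms by (intro emeasure_lborel_le_SUP_Int_lessThan uminus_image_borel) auto
  also have "\<dots> = (SUP b\<in>B. emeasure lborel (uminus ` (B \<inter> {b<..})))"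
    by (simp add: image_image image_Int image_uminus_greaterThan)
  also have "\<dots> = (SUP b\<in>B. emeasure lborel (B \<inter> {b<..}))"
    by (simp add: emeasure_lborel_uminus)
  finally show ?thesis .
qed

lemma emeasure_lborel_le_split_rays:
  fixes A B C :: "real set" and l a b :: real
  assumes [measurable]: "A \<in> sets borel" "B \<in> sets borel" "C \<in> sets borel"
    and l: "0 < l" "l < 1" and "a \<in> A" "b \<in> B"
    and convex_comb: "\<And>x y. x \<in> A \<Longrightarrow> y \<in> B \<Longrightarrow> (1 - l) * x + l * y \<in> C"
  shows "ennreal (1 - l) * emeasure lborel (A \<inter> {..<a}) + ennreal l * emeasure lborel (B \<inter> {b<..})
      \<le> emeasure lborel C"
proof -
  define z where "z = (1 - l) * a + l * b"
  have "(\<lambda>x. (1 - l) *\<^sub>R x + l * b) ` (A \<inter> {..<a}) \<subseteq> C \<inter> {..<z}"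
  proof safe
    fix x assume "x \<in> A" "x < a"
    then show "(1 - l) *\<^sub>R x + l * b \<in> C" "(1 - l) *\<^sub>R x + l * b < z"
      using convex_comb \<open>b \<in> B\<close> l by (auto simp: z_def)
  qed
  then have "emeasure lebesgue ((\<lambda>x. (1 - l) *\<^sub>R x + l * b) ` (A \<inter> {..<a}))
      \<le> emeasure lebesgue (C \<inter> {..<z})"
    by (rule emeasure_mono) simp
  then have left: "ennreal (1 - l) * emeasure lborel (A \<inter> {..<a}) \<le> emeasure lborel (C \<inter> {..<z})"
    using emeasure_lebesgue_affine[of "1 - l" "l * b" "A \<inter> {..<a}"] l by simp
  have "(\<lambda>y. l *\<^sub>R y + (1 - l) * a) ` (B \<inter> {b<..}) \<subseteq> C \<inter> {z<..}"
  proof safe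
    fix y assume "y \<in> B" "b < y"
    then show "l *\<^sub>R y + (1 - l) * a \<in> C" "z < l *\<^sub>R y + (1 - l) * a"
      using convex_comb[of a y] \<open>a \<in> A\<close> l by (auto simp: z_def add.commute)
  qed
  then have "emeasure lebesgue ((\<lambda>y. l *\<^sub>R y + (1 - l) * a) ` (B \<inter> {b<..}))
      \<le> emeasure lebesgue (C \<inter> {z<..})"
    by (rule emeasure_mono) simp
  then have right: "ennreal l * emeasure lborel (B \<inter> {b<..}) \<le> emeasure lborel (C \<inter> {z<..})"
    using emeasure_lebesgue_affine[of l "(1 - l) * a" "B \<inter> {b<..}"] l by simp
  have "emeasure lborel (C \<inter> {..<z}) + emeasure lborel (C \<inter> {z<..})
      = emeasure lborel (C \<inter> {..<z} \<union> C \<inter> {z<..})"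
    by (intro plus_emeasure) auto
  also have "\<dots> \<le> emeasure lborel C"
    by (intro emeasure_mono) auto
  finally show ?thesis
    using add_mono[OF left right] by (rule order_trans[rotated])
qed

lemma brunn_minkowski_real:
  fixes A B C :: "real set" and l :: real
  assumes [measurable]: "A \<in> sets borel" "B \<in> sets borel" "C \<in> sets borel"
    and l: "0 < l" "l < 1" and ne: "A \<noteq> {}" "B \<noteq> {}"
    and convex_comb: "\<And>x y. x \<in> A \<Longrightarrow> y \<in> B \<Longrightarrow> (1 - l) * x + l * y \<in> C"
  shows "ennreal (1 - l) * emeasure lborel A + ennreal l * emeasure lborel B \<le> emeasure lborel C"
proof -
  let ?L = "\<lambda>a. ennreal (1 - l) * emeasure lborel (A \<inter> {..<a})"
  let ?R = "\<lambda>b. ennreal l * emeasure lborel (B \<inter> {b<..})"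
  have "ennreal (1 - l) * emeasure lborel A + ennreal l * emeasure lborel B
      \<le> ennreal (1 - l) * (SUP a\<in>A. emeasure lborel (A \<inter> {..<a}))
        + ennreal l * (SUP b\<in>B. emeasure lborel (B \<inter> {b<..}))"
    using ne by (intro add_mono mult_left_mono emeasure_lborel_le_SUP_Int_lessThan
        emeasure_lborel_le_SUP_Int_greaterThan) auto
  also have "\<dots> = (SUP a\<in>A. ?L a) + (SUP b\<in>B. ?R b)"
    by (simp add: SUP_mult_left_ennreal)
  also have "\<dots> = (SUP a\<in>A. SUP b\<in>B. ?L a + ?R b)"
    by (simp add: ennreal_SUP_add_left[OF ne(1), symmetric] ennreal_SUP_add_right[OF ne(2), symmetric])
  also have "\<dots> \<le> emeasure lborel C"
    using l convex_comb by (intro SUP_least emeasure_lborel_le_split_rays) auto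
  finally show ?thesis .
qed

section \<open>Prekopa-Leindler inequality on the real line\<close>

lemma nn_integral_lborel_layer_cake:
  fixes f :: "real \<Rightarrow> real"
  assumes [measurable]: "f \<in> borel_measurable borel"
  shows "(\<integral>\<^sup>+x. ennreal (f x) \<partial>lborel)
      = (\<integral>\<^sup>+s. indicator {0<..} s * emeasure lborel {x. s < f x} \<partial>lborel)"
proof -
  define U where "U = {p \<in> space (lborel \<Otimes>\<^sub>M lborel). 0 < snd p \<and> snd p < f (fst p)}"
  have [measurable]: "U \<in> sets (lborel \<Otimes>\<^sub>M lborel)"
    unfolding U_def by measurable
  have "(\<integral>\<^sup>+x. ennreal (f x) \<partial>lborel) = (\<integral>\<^sup>+x. (\<integral>\<^sup>+s. indicator U (x, s) \<partial>lborel) \<partial>lborel)"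
  proof (rule nn_integral_cong)
    fix x
    have "(\<integral>\<^sup>+s. indicator U (x, s) \<partial>lborel) = (\<integral>\<^sup>+s. indicator {0<..<f x} s \<partial>lborel)"
      by (rule nn_integral_cong) (simp add: U_def space_pair_measure indicator_def)
    then show "ennreal (f x) = (\<integral>\<^sup>+s. indicator U (x, s) \<partial>lborel)"
      by (cases "0 \<le> f x") (auto simp: ennreal_neg)
  qed
  also have "\<dots> = (\<integral>\<^sup>+s. (\<integral>\<^sup>+x. indicator U (x, s) \<partial>lborel) \<partial>lborel)"
    by (rule lborel_pair.Fubini'[symmetric]) simp
  also have "\<dots> = (\<integral>\<^sup>+s. indicator {0<..} s * emeasure lborel {x. s < f x} \<partial>lborel)"
  proof (rule nn_integral_cong)
    fix s :: real
    show "(\<integral>\<^sup>+x. indicator U (x, s) \<partial>lborel) = indicator {0<..} s * emeasure lborel {x. s < f x}"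
      by (cases "0 < s") (auto simp: U_def space_pair_measure indicator_def simp flip: nn_integral_indicator
          intro!: nn_integral_cong)
  qed
  finally show ?thesis .
qed

lemma borel_measurable_emeasure_superlevel:
  fixes f :: "real \<Rightarrow> real"
  assumes [measurable]: "f \<in> borel_measurable borel"
  shows "(\<lambda>s. indicator {0<..} s * emeasure lborel {x. s < f x}) \<in> borel_measurable lborel"
proof -
  define U where "U = {p \<in> space (lborel \<Otimes>\<^sub>M lborel). 0 < fst p \<and> fst p < f (snd p)}"
  have [measurable]: "U \<in> sets (lborel \<Otimes>\<^sub>M lborel)"
    unfolding U_def by measurable
  have "indicator {0<..} s * emeasure lborel {x. s < f x} = (\<integral>\<^sup>+x. indicator U (s, x) \<partial>lborel)" for s
    by (cases "0 < s") (auto simp: U_def space_pair_measure indicator_def simp flip: nn_integral_indicator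
        intro!: nn_integral_cong)
  moreover have "(\<lambda>s. \<integral>\<^sup>+x. indicator U (s, x) \<partial>lborel) \<in> borel_measurable lborel"
    by (rule lborel.borel_measurable_nn_integral) simp
  ultimately show ?thesis by simp
qed

lemma emeasure_superlevel_brunn_minkowski:
  fixes f g h :: "real \<Rightarrow> real" and l s :: real
  assumes [measurable]: "f \<in> borel_measurable borel" "g \<in> borel_measurable borel" "h \<in> borel_measurable borel"
    and l: "0 < l" "l < 1" and "s < f x0" "s < g y0"
    and min_le: "\<And>x y. min (f x) (g y) \<le> h ((1 - l) * x + l * y)"
  shows "ennreal (1 - l) * emeasure lborel {x. s < f x} + ennreal l * emeasure lborel {y. s < g y}
      \<le> emeasure lborel {z. s < h z}"
proof (rule brunn_minkowski_real)
  fix x y assume "x \<in> {x. s < f x}" "y \<in> {y. s < g y}"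
  then have "s < min (f x) (g y)" by simp
  also note min_le[of x y]
  finally show "(1 - l) * x + l * y \<in> {z. s < h z}" by simp
qed (use assms in auto)

lemma nn_integral_prekopa_leindler_normalized:
  fixes f g h :: "real \<Rightarrow> real" and l :: real
  assumes [measurable]: "f \<in> borel_measurable borel" "g \<in> borel_measurable borel" "h \<in> borel_measurable borel"
    and l: "0 < l" "l < 1"
    and le_1: "\<And>x. f x \<le> 1" "\<And>x. g x \<le> 1"
    and sup_1: "\<And>s. s < 1 \<Longrightarrow> \<exists>x. s < f x" "\<And>s. s < 1 \<Longrightarrow> \<exists>y. s < g y"
    and min_le: "\<And>x y. min (f x) (g y) \<le> h ((1 - l) * x + l * y)"
  shows "ennreal (1 - l) * (\<integral>\<^sup>+x. ennreal (f x) \<partial>lborel) + ennreal l * (\<integral>\<^sup>+x. ennreal (g x) \<partial>lborel)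
      \<le> (\<integral>\<^sup>+x. ennreal (h x) \<partial>lborel)"
proof -
  let ?level = "\<lambda>\<phi> s. indicator {0<..} s * emeasure lborel {x. s < \<phi> x}"
  note [measurable] = borel_measurable_emeasure_superlevel[of f] borel_measurable_emeasure_superlevel[of g]
  have "ennreal (1 - l) * (\<integral>\<^sup>+x. ennreal (f x) \<partial>lborel) + ennreal l * (\<integral>\<^sup>+x. ennreal (g x) \<partial>lborel)
      = (\<integral>\<^sup>+s. ennreal (1 - l) * ?level f s + ennreal l * ?level g s \<partial>lborel)"
    by (simp add: nn_integral_lborel_layer_cake nn_integral_add nn_integral_cmult)
  also have "\<dots> \<le> (\<integral>\<^sup>+s. ?level h s \<partial>lborel)"
  proof (rule nn_integral_mono)
    fix s :: real
    \<comment> \<open>As both suprema are 1, the superlevel sets below level 1 are nonempty,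
      as Brunn-Minkowski needs.\<close>
    consider "s \<le> 0" | "0 < s" "s < 1" | "1 \<le> s" by linarith
    then show "ennreal (1 - l) * ?level f s + ennreal l * ?level g s \<le> ?level h s"
    proof cases
      case 2
      obtain x0 y0 where "s < f x0" "s < g y0" using sup_1 \<open>s < 1\<close> by blast
      with 2 show ?thesis
        using emeasure_superlevel_brunn_minkowski[of f g h l s x0 y0] l min_le by simp
    next
      case 3
      then have "\<not> s < f x" "\<not> s < g x" for x
        using le_1(1)[of x] le_1(2)[of x] by linarith+
      then show ?thesis by simp
    qed simp
  qed
  also have "\<dots> = (\<integral>\<^sup>+x. ennreal (h x) \<partial>lborel)"
    by (simp add: nn_integral_lborel_layer_cake)
  finally show ?thesis .
qed

lemma prekopa_leindler_normalized:
  fixes f g h :: "real \<Rightarrow> real" and l :: real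
  assumes int: "integrable lborel f" "integrable lborel g" "integrable lborel h"
    and nonneg: "\<And>x. 0 \<le> f x" "\<And>x. 0 \<le> g x" "\<And>x. 0 \<le> h x"
    and l: "0 < l" "l < 1"
    and le_1: "\<And>x. f x \<le> 1" "\<And>x. g x \<le> 1"
    and sup_1: "\<And>s. s < 1 \<Longrightarrow> \<exists>x. s < f x" "\<And>s. s < 1 \<Longrightarrow> \<exists>y. s < g y"
    and min_le: "\<And>x y. min (f x) (g y) \<le> h ((1 - l) * x + l * y)"
  shows "(1 - l) * integral\<^sup>L lborel f + l * integral\<^sup>L lborel g \<le> integral\<^sup>L lborel h"
proof -
  have "ennreal ((1 - l) * integral\<^sup>L lborel f + l * integral\<^sup>L lborel g)
      = ennreal (1 - l) * (\<integral>\<^sup>+x. ennreal (f x) \<partial>lborel) + ennreal l * (\<integral>\<^sup>+x. ennreal (g x) \<partial>lborel)"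
    using int nonneg l by (simp add: nn_integral_eq_integral ennreal_plus ennreal_mult)
  also have "\<dots> \<le> (\<integral>\<^sup>+x. ennreal (h x) \<partial>lborel)"
    using int l le_1 sup_1 min_le by (intro nn_integral_prekopa_leindler_normalized) auto
  also have "\<dots> = ennreal (integral\<^sup>L lborel h)"
    using int nonneg by (simp add: nn_integral_eq_integral)
  finally show ?thesis
    using nonneg by (simp add: ennreal_le_iff)
qed

lemma
  fixes f :: "'a \<Rightarrow> real"
  assumes "bdd_above (range f)" "0 < Sup (range f)"
  shows divide_Sup_range_le_1: "f x / Sup (range f) \<le> 1"
    and less_divide_Sup_range: "s < 1 \<Longrightarrow> \<exists>x. s < f x / Sup (range f)"
proof -
  show "f x / Sup (range f) \<le> 1"
    using assms by (simp add: cSup_upper)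
  assume "s < 1"
  with assms have "s * Sup (range f) < Sup (range f)" by simp
  then obtain x where "s * Sup (range f) < f x"
    using less_cSup_iff[OF _ assms(1)] by auto
  with assms show "\<exists>x. s < f x / Sup (range f)"
    by (auto simp: pos_less_divide_eq)
qed

lemma Sup_range_pos_if_integral_nonzero:
  fixes f :: "'a \<Rightarrow> real"
  assumes "bdd_above (range f)" "\<And>x. 0 \<le> f x" "integral\<^sup>L M f \<noteq> 0"
  shows "0 < Sup (range f)"
proof (rule ccontr)
  assume "\<not> 0 < Sup (range f)"
  then have "f x \<le> 0" for x
    using cSup_upper[OF rangeI assms(1)] by (meson not_less order_trans)
  then have "f = (\<lambda>_. 0)"
    using assms(2) by (intro ext antisym) auto
  with assms(3) show False by simp
qed

lemma min_le_powr_mult_powr: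
  fixes p q l :: real
  assumes "0 \<le> p" "0 \<le> q" "0 \<le> l" "l \<le> 1"
  shows "min p q \<le> p powr (1 - l) * q powr l"
proof (cases "min p q = 0")
  case False
  then have "0 < min p q" using assms by linarith
  then have "min p q = min p q powr (1 - l) * min p q powr l"
    by (simp flip: powr_add)
  also have "\<dots> \<le> p powr (1 - l) * q powr l"
    using \<open>0 < min p q\<close> assms by (intro mult_mono powr_mono2) auto
  finally show ?thesis .
qed simp

lemma powr_mult_powr_le_rescaled:
  fixes X Y Z a b l :: real
  assumes "0 < X" "0 < Y" "0 < a" "0 < b" "0 \<le> l" "l \<le> 1"
    and "(1 - l) * (X / a) + l * (Y / b) \<le> Z / (a powr (1 - l) * b powr l)"
  shows "X powr (1 - l) * Y powr l \<le> Z"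
proof -
  define c where "c = a powr (1 - l) * b powr l"
  have "0 < c" using assms by (simp add: c_def)
  have "X powr (1 - l) * Y powr l = c * ((X / a) powr (1 - l) * (Y / b) powr l)"
    using assms by (simp add: c_def powr_divide)
  also have "\<dots> \<le> c * ((1 - l) * (X / a) + l * (Y / b))"
    using \<open>0 < c\<close> assms by (intro mult_left_mono Youngs_inequality_0) auto
  also have "\<dots> \<le> Z"
    using \<open>0 < c\<close> assms(7) by (simp add: c_def pos_le_divide_eq mult.commute)
  finally show ?thesis .
qed

lemma prekopa_leindler_bounded:
  fixes f g h :: "real \<Rightarrow> real" and l K :: real
  assumes int: "integrable lborel f" "integrable lborel g" "integrable lborel h"
    and nonneg: "\<And>x. 0 \<le> f x" "\<And>x. 0 \<le> g x" "\<And>x. 0 \<le> h x"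
    and l: "0 < l" "l < 1"
    and bounded: "\<And>x. f x \<le> K" "\<And>x. g x \<le> K"
    and powr_le: "\<And>x y. f x powr (1 - l) * g y powr l \<le> h ((1 - l) * x + l * y)"
  shows "integral\<^sup>L lborel f powr (1 - l) * integral\<^sup>L lborel g powr l \<le> integral\<^sup>L lborel h"
proof (cases "0 < integral\<^sup>L lborel f \<and> 0 < integral\<^sup>L lborel g")
  case False
  moreover have "0 \<le> integral\<^sup>L lborel f" "0 \<le> integral\<^sup>L lborel g"
    using nonneg by simp_all
  ultimately have "integral\<^sup>L lborel f = 0 \<or> integral\<^sup>L lborel g = 0"
    by linarith
  then show ?thesis using nonneg by auto
next
  case True
  have bdd: "bdd_above (range f)" "bdd_above (range g)"
    using bounded by (meson bdd_aboveI2)+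
  define a where "a = Sup (range f)"
  define b where "b = Sup (range g)"
  define c where "c = a powr (1 - l) * b powr l"
  have "0 < a" "0 < b"
    using True bdd nonneg Sup_range_pos_if_integral_nonzero unfolding a_def b_def
    by (metis less_irrefl)+
  then have "0 < c" by (simp add: c_def)
  have f_normalized: "f x / a \<le> 1" "s < 1 \<Longrightarrow> \<exists>x. s < f x / a" for x s
    using divide_Sup_range_le_1[OF bdd(1)] less_divide_Sup_range[OF bdd(1)] \<open>0 < a\<close>
    unfolding a_def by blast+
  have g_normalized: "g y / b \<le> 1" "s < 1 \<Longrightarrow> \<exists>y. s < g y / b" for y s
    using divide_Sup_range_le_1[OF bdd(2)] less_divide_Sup_range[OF bdd(2)] \<open>0 < b\<close>
    unfolding b_def by blast+
  have "(1 - l) * integral\<^sup>L lborel (\<lambda>x. f x / a) + l * integral\<^sup>L lborel (\<lambda>x. g x / b)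
      \<le> integral\<^sup>L lborel (\<lambda>x. h x / c)"
  proof (rule prekopa_leindler_normalized)
    fix x y
    have "min (f x / a) (g y / b) \<le> (f x / a) powr (1 - l) * (g y / b) powr l"
      using nonneg \<open>0 < a\<close> \<open>0 < b\<close> l by (intro min_le_powr_mult_powr) auto
    also have "\<dots> = (f x powr (1 - l) * g y powr l) / c"
      using nonneg \<open>0 < a\<close> \<open>0 < b\<close> by (simp add: c_def powr_divide)
    also have "\<dots> \<le> h ((1 - l) * x + l * y) / c"
      using \<open>0 < c\<close> powr_le by (simp add: divide_right_mono)
    finally show "min (f x / a) (g y / b) \<le> h ((1 - l) * x + l * y) / c" .
  qed (use int nonneg l f_normalized g_normalized \<open>0 < a\<close> \<open>0 < b\<close> \<open>0 < c\<close> in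
      \<open>simp_all del: divide_le_eq_1\<close>)
  then show ?thesis
    using True \<open>0 < a\<close> \<open>0 < b\<close> l
    by (intro powr_mult_powr_le_rescaled) (simp_all add: c_def)
qed

lemma
  fixes f :: "'a \<Rightarrow> real"
  assumes "integrable M f" "\<And>x. 0 \<le> f x"
  shows integrable_min_of_nat: "integrable M (\<lambda>x. min (f x) (of_nat n))"
    and tendsto_integral_min_of_nat:
      "(\<lambda>n. integral\<^sup>L M (\<lambda>x. min (f x) (of_nat n))) \<longlonglongrightarrow> integral\<^sup>L M f"
proof -
  have [measurable]: "f \<in> borel_measurable M"
    using assms(1) by simp
  have lim: "AE x in M. (\<lambda>n. min (f x) (of_nat n)) \<longlonglongrightarrow> f x"
  proof (rule AE_I2, rule tendsto_eventually)
    fix x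
    obtain N where "f x \<le> of_nat N" using real_arch_simple by blast
    then show "\<forall>\<^sub>F n in sequentially. min (f x) (of_nat n) = f x"
      unfolding eventually_sequentially by (intro exI[of _ N]) auto
  qed
  have bound: "AE x in M. norm (min (f x) (of_nat n)) \<le> f x" for n
    using assms(2) by (intro AE_I2) auto
  show "integrable M (\<lambda>x. min (f x) (of_nat n))"
    by (rule integrable_dominated_convergence2[OF _ _ assms(1) lim bound]) auto
  show "(\<lambda>n. integral\<^sup>L M (\<lambda>x. min (f x) (of_nat n))) \<longlonglongrightarrow> integral\<^sup>L M f"
    by (rule integral_dominated_convergence[OF _ _ assms(1) lim bound]) auto
qed

theorem prekopa_leindler:
  fixes f g h :: "real \<Rightarrow> real" and l :: real
  assumes int: "integrable lborel f" "integrable lborel g" "integrable lborel h"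
    and nonneg: "\<And>x. 0 \<le> f x" "\<And>x. 0 \<le> g x" "\<And>x. 0 \<le> h x"
    and l: "0 < l" "l < 1"
    and powr_le: "\<And>x y. f x powr (1 - l) * g y powr l \<le> h ((1 - l) * x + l * y)"
  shows "integral\<^sup>L lborel f powr (1 - l) * integral\<^sup>L lborel g powr l \<le> integral\<^sup>L lborel h"
proof (rule LIMSEQ_le_const2)
  let ?f = "\<lambda>n x. min (f x) (of_nat n)" and ?g = "\<lambda>n x. min (g x) (of_nat n)"
  show "(\<lambda>n. integral\<^sup>L lborel (?f n) powr (1 - l) * integral\<^sup>L lborel (?g n) powr l)
      \<longlonglongrightarrow> integral\<^sup>L lborel f powr (1 - l) * integral\<^sup>L lborel g powr l"
    using l nonneg int
    by (intro tendsto_intros tendsto_powr' tendsto_integral_min_of_nat) auto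
  show "\<exists>N. \<forall>n\<ge>N. integral\<^sup>L lborel (?f n) powr (1 - l) * integral\<^sup>L lborel (?g n) powr l
      \<le> integral\<^sup>L lborel h"
  proof (intro exI allI impI)
    fix n :: nat
    show "integral\<^sup>L lborel (?f n) powr (1 - l) * integral\<^sup>L lborel (?g n) powr l \<le> integral\<^sup>L lborel h"
    proof (rule prekopa_leindler_bounded[where K = "of_nat n"])
      fix x y
      have "?f n x powr (1 - l) * ?g n y powr l \<le> f x powr (1 - l) * g y powr l"
        using nonneg l by (intro mult_mono powr_mono2) auto
      also note powr_le[of x y]
      finally show "?f n x powr (1 - l) * ?g n y powr l \<le> h ((1 - l) * x + l * y)" .
    qed (use int nonneg l in \<open>auto intro: integrable_min_of_nat\<close>)
  qed
qed

section \<open>Log-concave functions and their marginals\<close>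

lemma log_concave_nonneg: "log_concave f \<Longrightarrow> 0 \<le> f x"
  unfolding log_concave_def by blast

lemma log_concaveD:
  "log_concave f \<Longrightarrow> 0 \<le> t \<Longrightarrow> t \<le> 1 \<Longrightarrow> f x powr (1 - t) * f y powr t \<le> f ((1 - t) *\<^sub>R x + t *\<^sub>R y)"
  unfolding log_concave_def by blast

lemma log_concaveI:
  assumes "\<And>x. 0 \<le> f x"
    and "\<And>x y t. 0 < t \<Longrightarrow> t < 1 \<Longrightarrow> f x powr (1 - t) * f y powr t \<le> f ((1 - t) *\<^sub>R x + t *\<^sub>R y)"
  shows "log_concave f"
  unfolding log_concave_def
proof (intro conjI allI impI)
  fix x y and t :: real
  assume "0 \<le> t \<and> t \<le> 1"
  then consider "t = 0" | "t = 1" | "0 < t" "t < 1" by linarith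
  then show "f x powr (1 - t) * f y powr t \<le> f ((1 - t) *\<^sub>R x + t *\<^sub>R y)"
    by cases (use assms in auto)
qed (use assms in auto)

lemma log_concave_mult:
  assumes f: "log_concave f" and g: "log_concave g"
  shows "log_concave (\<lambda>x. f x * g x)"
proof (rule log_concaveI)
  fix x y and t :: real
  assume "0 < t" "t < 1"
  have "(f x * g x) powr (1 - t) * (f y * g y) powr t
      = (f x powr (1 - t) * f y powr t) * (g x powr (1 - t) * g y powr t)"
    using log_concave_nonneg[OF f] log_concave_nonneg[OF g] by (simp add: powr_mult)
  also have "\<dots> \<le> f ((1 - t) *\<^sub>R x + t *\<^sub>R y) * g ((1 - t) *\<^sub>R x + t *\<^sub>R y)"
    using \<open>0 < t\<close> \<open>t < 1\<close> log_concave_nonneg[OF f]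
    by (intro mult_mono log_concaveD[OF f] log_concaveD[OF g]) auto
  finally show "(f x * g x) powr (1 - t) * (f y * g y) powr t
      \<le> f ((1 - t) *\<^sub>R x + t *\<^sub>R y) * g ((1 - t) *\<^sub>R x + t *\<^sub>R y)" .
qed (simp add: f g log_concave_nonneg)

lemma log_concave_prod:
  assumes "\<And>i. i \<in> I \<Longrightarrow> log_concave (f i)"
  shows "log_concave (\<lambda>x. \<Prod>i\<in>I. f i x)"
  using assms
proof (induction I rule: infinite_finite_induct)
  case (infinite I)
  then show ?case by (simp add: log_concave_def)
next
  case empty
  then show ?case by (simp add: log_concave_def)
next
  case (insert i I)
  then show ?case by (simp add: log_concave_mult)
qed

lemma log_concave_compose_linear:
  assumes "log_concave f" "linear g"
  shows "log_concave (\<lambda>x. f (g x))"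
  using assms by (simp add: log_concave_def linear_add linear_scale)

lemma log_concave_indicator:
  assumes "convex S"
  shows "log_concave (indicator S :: _ \<Rightarrow> real)"
proof (rule log_concaveI)
  fix x y and t :: real
  assume "0 < t" "t < 1"
  then show "indicator S x powr (1 - t) * indicator S y powr t \<le> (indicator S ((1 - t) *\<^sub>R x + t *\<^sub>R y) :: real)"
    using assms by (auto simp: indicator_def convex_def)
qed simp

theorem log_concave_integral:
  fixes F :: "'a::real_vector \<Rightarrow> real \<Rightarrow> real"
  assumes lc: "log_concave (\<lambda>p. F (fst p) (snd p))"
    and int: "\<And>x. integrable lborel (F x)"
  shows "log_concave (\<lambda>x. LINT t|lborel. F x t)"
proof (rule log_concaveI)
  have nonneg: "0 \<le> F x t" for x t
    using log_concave_nonneg[OF lc, of "(x, t)"] by simp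
  then show "0 \<le> (LINT t|lborel. F x t)" for x
    by simp
  fix x y and l :: real
  assume "0 < l" "l < 1"
  show "(LINT t|lborel. F x t) powr (1 - l) * (LINT t|lborel. F y t) powr l
      \<le> (LINT t|lborel. F ((1 - l) *\<^sub>R x + l *\<^sub>R y) t)"
  proof (rule prekopa_leindler)
    fix s u
    show "F x s powr (1 - l) * F y u powr l \<le> F ((1 - l) *\<^sub>R x + l *\<^sub>R y) ((1 - l) * s + l * u)"
      using log_concaveD[OF lc, of l "(x, s)" "(y, u)"] \<open>0 < l\<close> \<open>l < 1\<close> by simp
  qed (use int nonneg \<open>0 < l\<close> \<open>l < 1\<close> in auto)
qed

lemma cdf_of_eq_integral: "cdf_of \<psi> x = (LINT t|lborel. indicator {..x} t * \<psi> t)"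
  by (simp add: cdf_of_def set_lebesgue_integral_def)

context
  fixes \<psi> :: "real \<Rightarrow> real"
  assumes int: "integrable lborel \<psi>" and nonneg: "\<And>t. 0 \<le> \<psi> t"
begin

lemma integrable_indicator_mult: "integrable lborel (\<lambda>t. indicator {..x} t * \<psi> t)"
  using integrable_mult_indicator[OF _ int, of "{..x}"] by simp

lemma cdf_of_nonneg: "0 \<le> cdf_of \<psi> x"
  by (simp add: cdf_of_eq_integral nonneg)

lemma cdf_of_le_integral: "cdf_of \<psi> x \<le> integral\<^sup>L lborel \<psi>"
  unfolding cdf_of_eq_integral
  by (intro integral_mono integrable_indicator_mult int) (auto simp: nonneg indicator_def)

lemma mono_cdf_of: "mono (cdf_of \<psi>)"
  unfolding cdf_of_eq_integral
  by (intro monoI integral_mono integrable_indicator_mult) (auto simp: nonneg indicator_def)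

end

lemma log_concave_cdf_of:
  assumes "log_concave \<psi>" "integrable lborel \<psi>"
  shows "log_concave (cdf_of \<psi>)"
proof -
  have "convex {p :: real \<times> real. snd p \<le> fst p}"
    by (auto simp: convex_def intro!: add_mono mult_left_mono)
  then have "log_concave (\<lambda>p :: real \<times> real. indicator {p. snd p \<le> fst p} p * \<psi> (snd p))"
    by (intro log_concave_mult log_concave_indicator
        log_concave_compose_linear[OF assms(1) bounded_linear.linear[OF bounded_linear_snd]])
  moreover have "(\<lambda>p. indicator {p. snd p \<le> fst p} p * \<psi> (snd p))
      = (\<lambda>p :: real \<times> real. indicator {..fst p} (snd p) * \<psi> (snd p))"
    by (simp add: indicator_def fun_eq_iff)
  ultimately have "log_concave (\<lambda>p :: real \<times> real. indicator {..fst p} (snd p) * \<psi> (snd p))"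
    by simp
  then show ?thesis
    unfolding cdf_of_eq_integral[abs_def]
    by (rule log_concave_integral) (use assms in \<open>simp add: integrable_indicator_mult log_concave_nonneg\<close>)
qed

lemma integrable_breve_Psi_integrand:
  fixes \<psi> :: "real \<Rightarrow> real" and v :: "real^'n" and m :: "'n::finite"
  assumes int: "integrable lborel \<psi>" and nonneg: "\<And>t. 0 \<le> \<psi> t"
  shows "integrable lborel (\<lambda>t. \<psi> t * (\<Prod>l\<in>UNIV - {m}. cdf_of \<psi> (t + v$m - v$l)))"
proof (rule Bochner_Integration.integrable_bound)
  let ?P = "\<lambda>t. \<Prod>l\<in>UNIV - {m}. cdf_of \<psi> (t + v$m - v$l)"
  let ?C = "\<Prod>l\<in>UNIV - {m}. integral\<^sup>L lborel \<psi>"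
  show "integrable lborel (\<lambda>t. \<psi> t * ?C)"
    using int by simp
  have [measurable]: "cdf_of \<psi> \<in> borel_measurable borel"
    using mono_cdf_of[OF int nonneg] by (rule borel_measurable_mono)
  show "(\<lambda>t. \<psi> t * ?P t) \<in> borel_measurable lborel"
    using int by measurable
  have "norm (\<psi> t * ?P t) \<le> norm (\<psi> t * ?C)" for t
  proof -
    have "0 \<le> ?P t"
      using cdf_of_nonneg[OF int nonneg] by (rule prod_nonneg)
    then have "norm (\<psi> t * ?P t) = \<psi> t * ?P t"
      using nonneg by simp
    also have "\<dots> \<le> \<psi> t * ?C"
      using cdf_of_nonneg[OF int nonneg] cdf_of_le_integral[OF int nonneg] nonneg
      by (intro mult_left_mono prod_mono) simp_all
    also have "\<dots> \<le> norm (\<psi> t * ?C)"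
      by simp
    finally show ?thesis .
  qed
  then show "AE t in lborel. norm (\<psi> t * ?P t) \<le> norm (\<psi> t * ?C)"
    by simp
qed

lemma log_concave_breve_Psi:
  fixes \<psi> :: "real \<Rightarrow> real" and m :: "'n::finite"
  assumes lc: "log_concave \<psi>" and int: "integrable lborel \<psi>"
  shows "log_concave (\<lambda>v::real^'n. breve_Psi \<psi> v m)"
proof -
  have linear_shift: "linear (\<lambda>p :: (real^'n) \<times> real. snd p + fst p $ m - fst p $ l)" for l
    by (rule linearI) (auto simp: algebra_simps)
  have "log_concave (\<lambda>p :: (real^'n) \<times> real.
      \<psi> (snd p) * (\<Prod>l\<in>UNIV - {m}. cdf_of \<psi> (snd p + fst p $ m - fst p $ l)))"
    using log_concave_cdf_of[OF lc int]
    by (intro log_concave_mult log_concave_prod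
        log_concave_compose_linear[OF lc bounded_linear.linear[OF bounded_linear_snd]]
        log_concave_compose_linear[OF _ linear_shift])
  then show ?thesis
    unfolding breve_Psi_def
    by (rule log_concave_integral)
      (use lc int in \<open>simp add: log_concave_nonneg integrable_breve_Psi_integrand\<close>)
qed

theorem proposition3p3:
  fixes \<psi> :: "real \<Rightarrow> real" and m :: "'n::finite"
  assumes "prob_density \<psi>"
    and "log_concave \<psi>"
    and "CARD('n) \<ge> 2"
  shows "log_concave (\<lambda>v::real^'n. breve_Psi \<psi> v m)"
  using log_concave_breve_Psi[OF assms(2)] assms(1) by (simp add: prob_density_def)

end
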